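(* Let $K$ be a field, $S=K[x_1,\dots,x_n]$, $A\subseteq\{1,\dots,n\}$, $f=\prod_{j\in A}x_j$, and let $J\subset I\subset S$ be monomial ideals. Then $$\operatorname{fdepth} I/J\le \operatorname{fdepth}(I/J)_f.$$
   Context: $S_f=K[x_1,\dots,x_n,x_j^{-1}:j\in A]$ and $(I/J)_f=IS_f/JS_f$. Let $R$ be $S$ or $S_f$ and $J\subset I\subset R$ monomial ideals (ideals generated by monomials). A prime filtration of $I/J$ is a chain $\mathcal F: J=J_0\subset J_1\subset\cdots\subset J_r=I$ of monomial ideals of $R$ such that $J_i/J_{i-1}\cong (R/P_i)(-a_i)$ as $\mathbb Z^n$-graded modules, with $a_i\in\mathbb Z^n$ and each $P_i$ a monomial prime ideal of $R$. The support of $\mathcal F$ is $\operatorname{Supp}(\mathcal F)=\{P_1,\dots,P_r\}$, $\operatorname{fdepth}\mathcal F=\min\{\dim R/P: P\in\operatorname{Supp}(\mathcal F)\}$, and $\operatorname{fdepth} I/J$ is the maximum of $\operatorname{fdepth}\mathcal F$ over all prime filtrations $\mathcal F$ of $I/J$. *)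

theory Defs
  imports Main "HOL-Library.Extended_Nat"
begin

text \<open>A monomial of
  R = K[x_1,...,x_n, x_j^{-1} : j in A] is identified with its exponent vector
  u :: nat => int (u k = 0 for k outside {1..n}, u k >= 0 for k not in A).
  R = S corresponds to A = {}, R = S_f to the given A.
  A monomial ideal of R is identified with the set of monomials it contains
  (it is the K-span of them).\<close>

definition mons :: "nat \<Rightarrow> nat set \<Rightarrow> (nat \<Rightarrow> int) set" where
  "mons n A = {u. (\<forall>k. k \<notin> {1..n} \<longrightarrow> u k = 0) \<and> (\<forall>k\<in>{1..n} - A. 0 \<le> u k)}"

definition monomial_ideal :: "nat \<Rightarrow> nat set \<Rightarrow> (nat \<Rightarrow> int) set \<Rightarrow> bool" where
  "monomial_ideal n A I \<longleftrightarrow> I \<subseteq> mons n A \<and> (\<forall>u\<in>I. \<forall>v\<in>mons n A. (\<lambda>k. u k + v k) \<in> I)"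

text \<open>Monomials of the extended ideal I R_f (I a monomial ideal of S).\<close>
definition ext_ideal :: "nat \<Rightarrow> nat set \<Rightarrow> (nat \<Rightarrow> int) set \<Rightarrow> (nat \<Rightarrow> int) set" where
  "ext_ideal n A I = {(\<lambda>k. u k + v k) | u v. u \<in> I \<and> v \<in> mons n A}"

text \<open>Monomial prime ideal of R generated by the variables x_k, k in B
  (B a subset of {1..n} disjoint from A, so that the ideal is proper).\<close>
definition mprime :: "nat \<Rightarrow> nat set \<Rightarrow> nat set \<Rightarrow> (nat \<Rightarrow> int) set" where
  "mprime n A B = {u \<in> mons n A. \<exists>k\<in>B. 0 < u k}"

text \<open>Multidegrees of (R/P_B)(-a): a + (monomials of R not in P_B).\<close>
definition shifted_quot :: "nat \<Rightarrow> nat set \<Rightarrow> nat set \<Rightarrow> (nat \<Rightarrow> int) \<Rightarrow> (nat \<Rightarrow> int) set" where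
  "shifted_quot n A B a = (\<lambda>u k. a k + u k) ` (mons n A - mprime n A B)"

text \<open>A prime filtration J = J_0 \<subseteq> ... \<subseteq> J_r = I of monomial ideals of R:
  Js = [J_0,...,J_r], ps = [(a_1,B_1),...,(a_r,B_r)] with
  J_i/J_{i-1} \<cong> (R/P_{B_i})(-a_i) as Z^n-graded modules, i.e. the monomials of
  J_i not in J_{i-1} are exactly the multidegrees of (R/P_{B_i})(-a_i).\<close>
definition prime_filtration ::
  "nat \<Rightarrow> nat set \<Rightarrow> (nat \<Rightarrow> int) set \<Rightarrow> (nat \<Rightarrow> int) set \<Rightarrow>
   (nat \<Rightarrow> int) set list \<Rightarrow> ((nat \<Rightarrow> int) \<times> nat set) list \<Rightarrow> bool" where
  "prime_filtration n A J I Js ps \<longleftrightarrow>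
     length Js = Suc (length ps) \<and> Js ! 0 = J \<and> Js ! length ps = I \<and>
     (\<forall>i \<le> length ps. monomial_ideal n A (Js ! i)) \<and>
     (\<forall>i < length ps.
        Js ! i \<subseteq> Js ! Suc i \<and>
        (\<forall>k. k \<notin> {1..n} \<longrightarrow> fst (ps ! i) k = 0) \<and>
        snd (ps ! i) \<subseteq> {1..n} - A \<and>
        Js ! Suc i - Js ! i = shifted_quot n A (snd (ps ! i)) (fst (ps ! i)))"

text \<open>dim R/P_B = n - |B|.  fdepth of a filtration = min over its support
  (infinity for the empty filtration of the zero module).\<close>
definition fdepth_filt :: "nat \<Rightarrow> ((nat \<Rightarrow> int) \<times> nat set) list \<Rightarrow> enat" where
  "fdepth_filt n ps = (INF p \<in> set ps. enat (n - card (snd p)))"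

definition fdepth :: "nat \<Rightarrow> nat set \<Rightarrow> (nat \<Rightarrow> int) set \<Rightarrow> (nat \<Rightarrow> int) set \<Rightarrow> enat" where
  "fdepth n A J I = (SUP (Js, ps) \<in> {(Js, ps). prime_filtration n A J I Js ps}. fdepth_filt n ps)"

end

theory Submission
  imports Defs
begin

text \<open>Localizing at f sends a prime filtration J = J_0 \<subseteq> \<dots> \<subseteq> J_r = I of I/J step by step
  to a chain of monomial ideals of S_f.  A factor (S/P_B)(-a) is annihilated by every x_k with
  k \<in> B; if such an x_k is inverted, the step collapses (J_i S_f = J_{i-1} S_f), and otherwise the
  factor localizes to (S_f/P_B S_f)(-a).  Deleting the collapsed steps leaves a prime filtration of
  (I/J)_f whose support is contained in the original one, so its fdepth can only be larger.\<close>

lemma mem_mons_iff: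
  "u \<in> mons n A \<longleftrightarrow> (\<forall>k. k \<notin> {1..n} \<longrightarrow> u k = 0) \<and> (\<forall>k. k \<in> {1..n} \<longrightarrow> k \<notin> A \<longrightarrow> 0 \<le> u k)"
  unfolding mons_def by auto

lemma monomial_ideal_subset_mons: "monomial_ideal n A X \<Longrightarrow> X \<subseteq> mons n A"
  unfolding monomial_ideal_def by blast

lemma monomial_ideal_add:
  "monomial_ideal n A X \<Longrightarrow> u \<in> X \<Longrightarrow> v \<in> mons n A \<Longrightarrow> (\<lambda>k. u k + v k) \<in> X"
  unfolding monomial_ideal_def by blast

lemma monomial_ideal_incr_var:
  assumes "monomial_ideal n {} X" "m \<in> X" "k \<in> {1..n}"
  shows "m(k := m k + 1) \<in> X"
proof -
  have "(\<lambda>j. if j = k then 1 else 0::int) \<in> mons n {}"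
    using assms(3) unfolding mem_mons_iff by auto
  moreover have "m(k := m k + 1) = (\<lambda>j. m j + (if j = k then 1 else 0))" by auto
  ultimately show ?thesis using monomial_ideal_add[OF assms(1,2)] by simp
qed

lemma mem_shifted_quot_iff:
  "x \<in> shifted_quot n A B a \<longleftrightarrow> (\<lambda>k. x k - a k) \<in> mons n A \<and> (\<forall>k\<in>B. x k \<le> a k)"
proof
  assume "x \<in> shifted_quot n A B a"
  then obtain u where "u \<in> mons n A - mprime n A B" "x = (\<lambda>k. a k + u k)"
    unfolding shifted_quot_def by blast
  then show "(\<lambda>k. x k - a k) \<in> mons n A \<and> (\<forall>k\<in>B. x k \<le> a k)"
    unfolding mprime_def by auto
next
  assume "(\<lambda>k. x k - a k) \<in> mons n A \<and> (\<forall>k\<in>B. x k \<le> a k)"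
  then have "(\<lambda>k. x k - a k) \<in> mons n A - mprime n A B"
    unfolding mprime_def by auto
  then show "x \<in> shifted_quot n A B a"
    unfolding shifted_quot_def by (intro image_eqI[where x="\<lambda>k. x k - a k"]) auto
qed

lemma ext_ideal_eq:
  assumes "monomial_ideal n {} X"
  shows "ext_ideal n A X = {u \<in> mons n A. \<exists>m\<in>X. \<forall>k\<in>{1..n} - A. m k \<le> u k}"
proof (intro equalityI subsetI)
  fix u assume "u \<in> ext_ideal n A X"
  then obtain m v where mv: "m \<in> X" "v \<in> mons n A" "u = (\<lambda>k. m k + v k)"
    unfolding ext_ideal_def by blast
  moreover have "m \<in> mons n {}" using mv(1) monomial_ideal_subset_mons[OF assms] by blast
  ultimately have "u \<in> mons n A" and "\<forall>k\<in>{1..n} - A. m k \<le> u k"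
    unfolding mem_mons_iff by auto
  with mv(1) show "u \<in> {u \<in> mons n A. \<exists>m\<in>X. \<forall>k\<in>{1..n} - A. m k \<le> u k}" by blast
next
  fix u assume "u \<in> {u \<in> mons n A. \<exists>m\<in>X. \<forall>k\<in>{1..n} - A. m k \<le> u k}"
  then obtain m where u: "u \<in> mons n A" and m: "m \<in> X" and le: "\<forall>k\<in>{1..n} - A. m k \<le> u k"
    by blast
  have "m \<in> mons n {}" using m monomial_ideal_subset_mons[OF assms] by blast
  then have "(\<lambda>k. u k - m k) \<in> mons n A" using u le unfolding mem_mons_iff by auto
  with m show "u \<in> ext_ideal n A X"
    unfolding ext_ideal_def by (intro CollectI exI[of _ m] exI[of _ "\<lambda>k. u k - m k"]) auto
qed

lemma monomial_ideal_ext_ideal: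
  assumes "monomial_ideal n {} X"
  shows "monomial_ideal n A (ext_ideal n A X)"
  unfolding monomial_ideal_def
proof (intro conjI ballI)
  show "ext_ideal n A X \<subseteq> mons n A" using ext_ideal_eq[OF assms] by blast
next
  fix u v assume "u \<in> ext_ideal n A X" and v: "v \<in> mons n A"
  then obtain m where u: "u \<in> mons n A" and "m \<in> X" and le: "\<forall>k\<in>{1..n} - A. m k \<le> u k"
    using ext_ideal_eq[OF assms] by blast
  moreover have "(\<lambda>k. u k + v k) \<in> mons n A" using u v unfolding mem_mons_iff by auto
  moreover have "\<forall>k\<in>{1..n} - A. m k \<le> u k + v k" using le v unfolding mem_mons_iff by force
  ultimately show "(\<lambda>k. u k + v k) \<in> ext_ideal n A X" using ext_ideal_eq[OF assms] by blast
qed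

lemma ext_ideal_mono: "X \<subseteq> Y \<Longrightarrow> ext_ideal n A X \<subseteq> ext_ideal n A Y"
  unfolding ext_ideal_def by blast

text \<open>x_k with k \<in> B annihilates the factor J'/J \<cong> (S/P_B)(-a).\<close>
lemma shifted_quot_incr_var_mem:
  assumes "monomial_ideal n {} J'" and "J' - J = shifted_quot n {} B a"
    and m: "m \<in> shifted_quot n {} B a" and "k \<in> B" "k \<in> {1..n}"
  shows "m(k := m k + 1) \<in> J"
proof -
  have "m \<in> J'" using assms(2) m by blast
  then have "m(k := m k + 1) \<in> J'" using monomial_ideal_incr_var assms(1,5) by blast
  moreover have "a k \<le> m k" using m assms(5) by (simp add: mem_shifted_quot_iff mem_mons_iff)
  then have "m(k := m k + 1) \<notin> shifted_quot n {} B a"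
    using assms(4) by (auto simp: mem_shifted_quot_iff)
  ultimately show ?thesis using assms(2) by blast
qed

lemma ext_ideal_step_collapse:
  assumes A: "A \<subseteq> {1..n}" and J: "monomial_ideal n {} J" and J': "monomial_ideal n {} J'"
    and "J \<subseteq> J'" and step: "J' - J = shifted_quot n {} B a" and "B \<inter> A \<noteq> {}"
  shows "ext_ideal n A J' = ext_ideal n A J"
proof
  show "ext_ideal n A J \<subseteq> ext_ideal n A J'" using \<open>J \<subseteq> J'\<close> by (rule ext_ideal_mono)
next
  obtain k where k: "k \<in> B" "k \<in> A" using \<open>B \<inter> A \<noteq> {}\<close> by blast
  show "ext_ideal n A J' \<subseteq> ext_ideal n A J"
  proof
    fix u assume "u \<in> ext_ideal n A J'"
    then obtain m where u: "u \<in> mons n A" and m: "m \<in> J'" and le: "\<forall>j\<in>{1..n} - A. m j \<le> u j"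
      using ext_ideal_eq[OF J'] by blast
    have "\<exists>m'\<in>J. \<forall>j\<in>{1..n} - A. m' j \<le> u j"
    proof (cases "m \<in> J")
      case False
      then have "m(k := m k + 1) \<in> J"
        using shifted_quot_incr_var_mem[OF J' step _ k(1)] m step k(2) A by blast
      moreover have "\<forall>j\<in>{1..n} - A. (m(k := m k + 1)) j \<le> u j" using le k(2) by auto
      ultimately show ?thesis by blast
    qed (use le in blast)
    then show "u \<in> ext_ideal n A J" using u ext_ideal_eq[OF J] by blast
  qed
qed

lemma ext_ideal_step_diff_subset:
  assumes J: "monomial_ideal n {} J" and J': "monomial_ideal n {} J'"
    and step: "J' - J = shifted_quot n {} B a" and "B \<subseteq> {1..n} - A"
    and a_supp: "\<forall>k. k \<notin> {1..n} \<longrightarrow> a k = 0"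
  shows "ext_ideal n A J' - ext_ideal n A J \<subseteq> shifted_quot n A B a"
proof
  fix u assume u_diff: "u \<in> ext_ideal n A J' - ext_ideal n A J"
  then obtain m where u: "u \<in> mons n A" and m: "m \<in> J'" and le: "\<forall>j\<in>{1..n} - A. m j \<le> u j"
    using ext_ideal_eq[OF J'] by blast
  have "m \<notin> J" using u_diff u le ext_ideal_eq[OF J] by blast
  then have m_sq: "m \<in> shifted_quot n {} B a" using m step by blast
  then have w: "(\<lambda>j. m j - a j) \<in> mons n {}" and mB: "\<forall>k\<in>B. m k \<le> a k"
    by (auto simp: mem_shifted_quot_iff)
  have "(\<lambda>j. u j - a j) \<in> mons n A" using u a_supp le w unfolding mem_mons_iff by force
  moreover have "u k \<le> a k" if k: "k \<in> B" for k
  proof (rule ccontr)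
    assume "\<not> u k \<le> a k"
    moreover have "m k = a k" using w mB k \<open>B \<subseteq> {1..n} - A\<close> by (force simp: mem_mons_iff)
    ultimately have "\<forall>j\<in>{1..n} - A. (m(k := m k + 1)) j \<le> u j" using le by auto
    moreover have "m(k := m k + 1) \<in> J"
      using shifted_quot_incr_var_mem[OF J' step m_sq k] k \<open>B \<subseteq> {1..n} - A\<close> by blast
    ultimately show False using u u_diff ext_ideal_eq[OF J] by blast
  qed
  ultimately show "u \<in> shifted_quot n A B a" by (simp add: mem_shifted_quot_iff)
qed

lemma ext_ideal_step_diff_supset:
  assumes A: "A \<subseteq> {1..n}" and J: "monomial_ideal n {} J" and J': "monomial_ideal n {} J'"
    and step: "J' - J = shifted_quot n {} B a" and "B \<inter> A = {}"
  shows "shifted_quot n A B a \<subseteq> ext_ideal n A J' - ext_ideal n A J"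
proof
  have "a \<in> shifted_quot n {} B a" by (simp add: mem_shifted_quot_iff mem_mons_iff)
  then have aJ': "a \<in> J'" using step by blast
  then have a_mons: "a \<in> mons n {}" using monomial_ideal_subset_mons[OF J'] by blast
  fix u assume "u \<in> shifted_quot n A B a"
  then have w: "(\<lambda>j. u j - a j) \<in> mons n A" and uB: "\<forall>k\<in>B. u k \<le> a k"
    by (auto simp: mem_shifted_quot_iff)
  have u: "u \<in> mons n A" using w a_mons unfolding mem_mons_iff by force
  have "\<forall>j\<in>{1..n} - A. a j \<le> u j" using w unfolding mem_mons_iff by force
  then have "u \<in> ext_ideal n A J'" using u aJ' ext_ideal_eq[OF J'] by blast
  moreover have "u \<notin> ext_ideal n A J"
  proof
    assume "u \<in> ext_ideal n A J"
    then obtain m where m: "m \<in> J" and le: "\<forall>j\<in>{1..n} - A. m j \<le> u j"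
      using ext_ideal_eq[OF J] by blast
    have "m \<in> mons n {}" using m monomial_ideal_subset_mons[OF J] by blast
    \<comment> \<open>z dominates m, hence lies in J, but lies over a and agrees with u on B, hence in J' - J\<close>
    define z where "z = (\<lambda>k. if k \<in> A then max (m k) (a k) else u k)"
    have "(\<lambda>k. z k - m k) \<in> mons n {}"
      using u \<open>m \<in> mons n {}\<close> le A unfolding mem_mons_iff z_def by auto
    moreover have "z = (\<lambda>k. m k + (\<lambda>k. z k - m k) k)" by auto
    ultimately have "z \<in> J" using monomial_ideal_add[OF J m] by metis
    moreover have "z \<in> shifted_quot n {} B a"
      using u a_mons w A uB \<open>B \<inter> A = {}\<close> unfolding mem_shifted_quot_iff mem_mons_iff z_def by force
    ultimately show False using step by blast
  qed
  ultimately show "u \<in> ext_ideal n A J' - ext_ideal n A J" by blast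
qed

lemma prime_filtration_Nil_iff:
  "prime_filtration n A J I Js [] \<longleftrightarrow> Js = [J] \<and> J = I \<and> monomial_ideal n A J"
  by (cases Js) (auto simp: prime_filtration_def)

lemma All_le_Suc2: "(\<forall>i\<le>Suc m. P i) \<longleftrightarrow> P 0 \<and> (\<forall>i\<le>m. P (Suc i))"
  by (metis Suc_le_mono le0 not0_implies_Suc)

lemma prime_filtration_Cons_iff:
  "prime_filtration n A J I Js (p # ps) \<longleftrightarrow>
     (\<exists>J1 Js1. Js = J # Js1 \<and> monomial_ideal n A J \<and> J \<subseteq> J1 \<and>
        (\<forall>k. k \<notin> {1..n} \<longrightarrow> fst p k = 0) \<and> snd p \<subseteq> {1..n} - A \<and>
        J1 - J = shifted_quot n A (snd p) (fst p) \<and> prime_filtration n A J1 I Js1 ps)"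
proof (cases Js)
  case (Cons J0 Js1)
  then show ?thesis
    by (simp add: prime_filtration_def All_le_Suc2 All_less_Suc2) (cases Js1; auto)
qed (simp add: prime_filtration_def)

lemma prime_filtration_ext_ideal:
  assumes A: "A \<subseteq> {1..n}"
  shows "prime_filtration n {} J I Js ps \<Longrightarrow>
    \<exists>Js' ps'. prime_filtration n A (ext_ideal n A J) (ext_ideal n A I) Js' ps' \<and> set ps' \<subseteq> set ps"
proof (induction ps arbitrary: J Js)
  case Nil
  then have "prime_filtration n A (ext_ideal n A J) (ext_ideal n A I) [ext_ideal n A J] []"
    by (auto simp: prime_filtration_Nil_iff intro: monomial_ideal_ext_ideal)
  then show ?case by blast
next
  case (Cons p ps)
  obtain a B where p: "p = (a, B)" by (cases p)
  from Cons.prems obtain J1 Js1 where J: "monomial_ideal n {} J" and "J \<subseteq> J1"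
    and a_supp: "\<forall>k. k \<notin> {1..n} \<longrightarrow> a k = 0" and B: "B \<subseteq> {1..n}"
    and step: "J1 - J = shifted_quot n {} B a" and filt: "prime_filtration n {} J1 I Js1 ps"
    unfolding prime_filtration_Cons_iff p by auto
  have J1: "monomial_ideal n {} J1" using filt unfolding prime_filtration_def by force
  obtain Js' ps' where IH: "prime_filtration n A (ext_ideal n A J1) (ext_ideal n A I) Js' ps'"
    and "set ps' \<subseteq> set ps"
    using Cons.IH[OF filt] by blast
  show ?case
  proof (cases "B \<inter> A = {}")
    case True
    then have "ext_ideal n A J1 - ext_ideal n A J = shifted_quot n A B a"
      using ext_ideal_step_diff_subset[OF J J1 step _ a_supp] ext_ideal_step_diff_supset[OF A J J1 step] B
      by blast
    then have "prime_filtration n A (ext_ideal n A J) (ext_ideal n A I) (ext_ideal n A J # Js') (p # ps')"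
      unfolding prime_filtration_Cons_iff p fst_conv snd_conv
      using monomial_ideal_ext_ideal[OF J] ext_ideal_mono[OF \<open>J \<subseteq> J1\<close>] a_supp B True IH
      by (intro exI[of _ "ext_ideal n A J1"] exI[of _ Js'] conjI) auto
    then show ?thesis using \<open>set ps' \<subseteq> set ps\<close> by fastforce
  next
    case False
    then have "ext_ideal n A J1 = ext_ideal n A J"
      using ext_ideal_step_collapse[OF A J J1 \<open>J \<subseteq> J1\<close> step] by blast
    then show ?thesis using IH \<open>set ps' \<subseteq> set ps\<close> by auto
  qed
qed

lemma fdepth_filt_mono: "set ps' \<subseteq> set ps \<Longrightarrow> fdepth_filt n ps \<le> fdepth_filt n ps'"
  unfolding fdepth_filt_def by (rule INF_superset_mono) auto

lemma fdepth_filt_le_fdepth: "prime_filtration n A J I Js ps \<Longrightarrow> fdepth_filt n ps \<le> fdepth n A J I"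
  unfolding fdepth_def by (rule SUP_upper2[of "(Js, ps)"]) auto

lemma fdepth_le_fdepth_if_support_subset:
  assumes "\<And>Js ps. prime_filtration n A J I Js ps \<Longrightarrow>
    \<exists>Js' ps'. prime_filtration n A' J' I' Js' ps' \<and> set ps' \<subseteq> set ps"
  shows "fdepth n A J I \<le> fdepth n A' J' I'"
  unfolding fdepth_def [of n A J I]
proof (rule SUP_least, clarify)
  fix Js ps assume "prime_filtration n A J I Js ps"
  then obtain Js' ps' where "prime_filtration n A' J' I' Js' ps'" and "set ps' \<subseteq> set ps"
    using assms by blast
  then show "fdepth_filt n ps \<le> fdepth n A' J' I'"
    using fdepth_filt_mono fdepth_filt_le_fdepth order_trans by blast
qed

theorem theorem5p1:
  fixes n :: nat and A :: "nat set" and I J :: "(nat \<Rightarrow> int) set"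
  assumes "A \<subseteq> {1..n}"
    and "monomial_ideal n {} J" and "monomial_ideal n {} I" and "J \<subseteq> I"
  shows "fdepth n {} J I \<le> fdepth n A (ext_ideal n A J) (ext_ideal n A I)"
  using prime_filtration_ext_ideal[OF assms(1)] by (rule fdepth_le_fdepth_if_support_subset)

end
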